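(* Let $G$ be a neighborhood unit square graph with $V(G)\neq\emptyset$. Let $X$ be the set of vertices $v\in V(G)$ for which there exist vertices $w_1,\dots,w_6\in V(G)\setminus\{v\}$ with $vw_i\notin E(G)$ for all $i\in[6]$ and $G[\{w_1,\dots,w_6\}]\cong S_3$. Then $X\ne V(G)$.
   Context: A neighborhood unit square graph is a graph $G$ admitting a map $f\colon V(G)\to[-1,1]^2$ such that for distinct $v,w$, $vw\in E(G)$ iff $\|f(v)-f(w)\|_\infty\le1$. $S_3$ (the 3-sun) is the graph on $w_1,\dots,w_6$ with edges $w_4w_5,w_5w_6,w_4w_6$ (a triangle), $w_1w_4,w_1w_6$, $w_2w_4,w_2w_5$, $w_3w_5,w_3w_6$. *)

theory Defs
  imports Main "HOL-Analysis.Analysis"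
begin

definition simple_graph :: "'a set \<Rightarrow> ('a \<Rightarrow> 'a \<Rightarrow> bool) \<Rightarrow> bool" where
  "simple_graph V E \<longleftrightarrow> finite V \<and> (\<forall>u v. E u v \<longrightarrow> u \<in> V \<and> v \<in> V)
     \<and> (\<forall>u v. E u v \<longrightarrow> E v u) \<and> (\<forall>v. \<not> E v v)"

definition linf_dist :: "real \<times> real \<Rightarrow> real \<times> real \<Rightarrow> real" where
  "linf_dist p q = max \<bar>fst p - fst q\<bar> \<bar>snd p - snd q\<bar>"

definition nusg :: "'a set \<Rightarrow> ('a \<Rightarrow> 'a \<Rightarrow> bool) \<Rightarrow> bool" where
  "nusg V E \<longleftrightarrow> simple_graph V E \<and>
     (\<exists>f :: 'a \<Rightarrow> real \<times> real.
        (\<forall>v\<in>V. \<bar>fst (f v)\<bar> \<le> 1 \<and> \<bar>snd (f v)\<bar> \<le> 1) \<and>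
        (\<forall>v\<in>V. \<forall>w\<in>V. v \<noteq> w \<longrightarrow> (E v w \<longleftrightarrow> linf_dist (f v) (f w) \<le> 1)))"

text \<open>Edges of the 3-sun S_3 on vertices 1..6: triangle 4,5,6; 1-4,1-6; 2-4,2-5; 3-5,3-6.\<close>
definition sun3_edges :: "(nat \<times> nat) set" where
  "sun3_edges = {(4,5),(5,6),(4,6),(1,4),(1,6),(2,4),(2,5),(3,5),(3,6)}"

definition sun3_adj :: "nat \<Rightarrow> nat \<Rightarrow> bool" where
  "sun3_adj i j \<longleftrightarrow> (i, j) \<in> sun3_edges \<or> (j, i) \<in> sun3_edges"

definition induces_sun3 :: "('a \<Rightarrow> 'a \<Rightarrow> bool) \<Rightarrow> (nat \<Rightarrow> 'a) \<Rightarrow> bool" where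
  "induces_sun3 E w \<longleftrightarrow> inj_on w {1..6} \<and>
     (\<forall>i\<in>{1..6}. \<forall>j\<in>{1..6}. E (w i) (w j) \<longleftrightarrow> sun3_adj i j)"

definition sun3_far_set :: "'a set \<Rightarrow> ('a \<Rightarrow> 'a \<Rightarrow> bool) \<Rightarrow> 'a set" where
  "sun3_far_set V E = {v \<in> V. \<exists>w :: nat \<Rightarrow> 'a.
      (\<forall>i\<in>{1..6}. w i \<in> V - {v} \<and> \<not> E v (w i)) \<and> induces_sun3 E w}"

end

theory Submission
  imports Defs
begin

text \<open>Take a vertex v whose point \<open>(a, b)\<close> has the least \<open>|x|\<close>-coordinate;
  reflecting the square, \<open>a \<ge> 0\<close>. A non-neighbour of v has \<open>|x| \<ge> a\<close> and
  sup-distance more than 1 from \<open>(a, b)\<close>, so it lies in the strip \<open>x < a - 1\<close> or in one of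
  the strips \<open>y > b + 1\<close>, \<open>y < b - 1\<close>, at most one of which meets the square. Two points
  of one strip differ by less than 1 in the coordinate across it, so there adjacency is decided by
  the other coordinate alone; a finite case analysis of the resulting linear inequalities shows
  that six such points cannot realise the 3-sun.\<close>

definition in_unit_box :: "real \<times> real \<Rightarrow> bool" where
  "in_unit_box p \<longleftrightarrow> \<bar>fst p\<bar> \<le> 1 \<and> \<bar>snd p\<bar> \<le> 1"

lemma sun3_not_far_from_min_abs_fst:
  fixes q :: "real \<times> real" and p :: "nat \<Rightarrow> real \<times> real"
  assumes box: "in_unit_box q" "\<And>i. i \<in> {1..6} \<Longrightarrow> in_unit_box (p i)"
    and min: "\<And>i. i \<in> {1..6} \<Longrightarrow> \<bar>fst q\<bar> \<le> \<bar>fst (p i)\<bar>"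
    and far: "\<And>i. i \<in> {1..6} \<Longrightarrow> 1 < linf_dist q (p i)"
    and sun: "\<And>i j. i \<in> {1..6} \<Longrightarrow> j \<in> {1..6} \<Longrightarrow> i \<noteq> j \<Longrightarrow>
                sun3_adj i j \<longleftrightarrow> linf_dist (p i) (p j) \<le> 1"
  shows False
proof -
  have point: "in_unit_box (p i) \<and> \<bar>fst q\<bar> \<le> \<bar>fst (p i)\<bar> \<and> 1 < linf_dist q (p i)"
    if "i \<in> {1, 2, 3, 4, 5, 6}" for i
    using that box min far by force
  have pair: "sun3_adj i j \<longleftrightarrow> linf_dist (p i) (p j) \<le> 1"
    if "i \<in> {1, 2, 3, 4, 5, 6}" "j \<in> {1, 2, 3, 4, 5, 6}" "i < j" for i j
    using that sun by force
  show False
    using box(1) point[of 1] point[of 2] point[of 3] point[of 4] point[of 5] point[of 6]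
      pair[of 4 5] pair[of 5 6] pair[of 4 6] pair[of 1 4] pair[of 1 6]
      pair[of 2 4] pair[of 2 5] pair[of 3 5] pair[of 3 6]
      pair[of 1 2] pair[of 1 3] pair[of 2 3] pair[of 1 5] pair[of 2 6] pair[of 3 4]
    unfolding in_unit_box_def linf_dist_def sun3_adj_def sun3_edges_def
    by simp (smt (verit))
qed

lemma nusg_embedding:
  assumes "nusg V E"
  obtains f where "\<And>v. v \<in> V \<Longrightarrow> in_unit_box (f v)"
    and "\<And>v w. v \<in> V \<Longrightarrow> w \<in> V \<Longrightarrow> v \<noteq> w \<Longrightarrow> E v w \<longleftrightarrow> linf_dist (f v) (f w) \<le> 1"
proof -
  from assms obtain f :: "'a \<Rightarrow> real \<times> real"
    where box: "\<forall>v\<in>V. \<bar>fst (f v)\<bar> \<le> 1 \<and> \<bar>snd (f v)\<bar> \<le> 1"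
      and adj: "\<forall>v\<in>V. \<forall>w\<in>V. v \<noteq> w \<longrightarrow> (E v w \<longleftrightarrow> linf_dist (f v) (f w) \<le> 1)"
    unfolding nusg_def by (elim conjE exE) fast
  show thesis
    by (rule that[of f]) (use box adj in \<open>auto simp: in_unit_box_def\<close>)
qed

lemma induces_sun3_linf_dist:
  assumes sun: "induces_sun3 E w" and w_in_V: "w ` {1..6} \<subseteq> V"
    and adj: "\<And>v u. v \<in> V \<Longrightarrow> u \<in> V \<Longrightarrow> v \<noteq> u \<Longrightarrow> E v u \<longleftrightarrow> linf_dist (f v) (f u) \<le> 1"
    and ij: "i \<in> {1..6}" "j \<in> {1..6}" "i \<noteq> j"
  shows "sun3_adj i j \<longleftrightarrow> linf_dist (f (w i)) (f (w j)) \<le> 1"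
proof -
  have "w i \<noteq> w j"
    using sun ij unfolding induces_sun3_def inj_on_def by blast
  moreover have "E (w i) (w j) \<longleftrightarrow> sun3_adj i j"
    using sun ij unfolding induces_sun3_def by blast
  moreover have "w i \<in> V" "w j \<in> V"
    using w_in_V ij by auto
  ultimately show ?thesis
    using adj[of "w i" "w j"] by simp
qed

theorem mainTheorem19:
  fixes V :: "'a set" and E :: "'a \<Rightarrow> 'a \<Rightarrow> bool"
  assumes "nusg V E" and "V \<noteq> {}"
  shows "sun3_far_set V E \<noteq> V"
proof
  assume all_far: "sun3_far_set V E = V"
  obtain f where box: "\<And>v. v \<in> V \<Longrightarrow> in_unit_box (f v)"
    and adj: "\<And>v w. v \<in> V \<Longrightarrow> w \<in> V \<Longrightarrow> v \<noteq> w \<Longrightarrow> E v w \<longleftrightarrow> linf_dist (f v) (f w) \<le> 1"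
    using nusg_embedding[OF assms(1)] by blast
  have fin: "finite V"
    using assms(1) unfolding nusg_def simple_graph_def by blast
  define v where "v = arg_min_on (\<lambda>u. \<bar>fst (f u)\<bar>) V"
  have v_in_V: "v \<in> V"
    unfolding v_def by (rule arg_min_if_finite(1)[OF fin assms(2)])
  have v_min: "\<bar>fst (f v)\<bar> \<le> \<bar>fst (f u)\<bar>" if "u \<in> V" for u
    unfolding v_def by (rule arg_min_least[OF fin assms(2) that])
  have "v \<in> sun3_far_set V E"
    using all_far v_in_V by simp
  then obtain w where w: "\<And>i. i \<in> {1..6} \<Longrightarrow> w i \<in> V - {v} \<and> \<not> E v (w i)"
    and sun: "induces_sun3 E w"
    unfolding sun3_far_set_def by blast
  have w_in_V: "w ` {1..6} \<subseteq> V"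
    using w by blast
  show False
  proof (rule sun3_not_far_from_min_abs_fst)
    show "in_unit_box (f v)" "\<And>i. i \<in> {1..6} \<Longrightarrow> in_unit_box (f (w i))"
      using box v_in_V w by auto
    show "\<And>i. i \<in> {1..6} \<Longrightarrow> \<bar>fst (f v)\<bar> \<le> \<bar>fst (f (w i))\<bar>"
      using v_min w by blast
    show "1 < linf_dist (f v) (f (w i))" if "i \<in> {1..6}" for i
      using adj[OF v_in_V, of "w i"] w[OF that] by auto
    show "\<And>i j. i \<in> {1..6} \<Longrightarrow> j \<in> {1..6} \<Longrightarrow> i \<noteq> j \<Longrightarrow>
            sun3_adj i j \<longleftrightarrow> linf_dist (f (w i)) (f (w j)) \<le> 1"
      using induces_sun3_linf_dist[OF sun w_in_V adj] .
  qed
qed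

end
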